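(* Let $\Omega\subset\mathbb{R}^2$ be a compact convex set with nonempty interior $\Omega^\circ$, let $P\subset\Omega^\circ$ be a finite set, and let $f=G_P\mathbf{0}_\Omega$. Then every connected component of $\Omega^\circ\setminus C(f)$ whose closure does not intersect $\partial\Omega$ contains a point of $P$ in its closure.
   Context: An $\Omega$-tropical series is a function $f:\Omega\to\mathbb{R}$ such that $f\ge 0$ on $\Omega$, $f=0$ on $\partial\Omega$, and there exist coefficients $c_{ij}\in\mathbb{R}\cup\{+\infty\}$, $(i,j)\in\mathbb{Z}^2$, such that for all $(x,y)\in\Omega^\circ$, $f(x,y)=\min\{c_{ij}+ix+jy : (i,j)\in\mathbb{Z}^2\}$. Let $V(\Omega)$ denote the set of all $\Omega$-tropical series. For $f\in V(\Omega)$, the $\Omega$-tropical curve $C(f)$ is the set of points of $\Omega^\circ$ at which $f$ is not smooth (the corner locus). For a finite set $P\subset\Omega^\circ$ and $f\in V(\Omega)$, define $G_Pf(x,y)=\min\{g(x,y) : g\in V(\Omega),\ g\ge f,\ P\subset C(g)\}$ (pointwise). $\mathbf{0}_\Omega$ denotes the identically zero function on $\Omega$ (an $\Omega$-tropical series). *)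

theory Defs
  imports "HOL-Analysis.Analysis"
begin

type_synonym pt = "real \<times> real"

definition tropical_series :: "pt set \<Rightarrow> (pt \<Rightarrow> real) \<Rightarrow> bool" where
  "tropical_series \<Omega> f \<longleftrightarrow>
     (\<forall>p\<in>\<Omega>. f p \<ge> 0) \<and> (\<forall>p\<in>frontier \<Omega>. f p = 0) \<and>
     (\<exists>c :: int \<times> int \<Rightarrow> ereal. (\<forall>i j. c (i, j) \<noteq> -\<infinity>) \<and>
        (\<forall>x y. (x, y) \<in> interior \<Omega> \<longrightarrow>
           (\<exists>i j. ereal (f (x, y)) = c (i, j) + ereal (of_int i * x + of_int j * y)) \<and>
           (\<forall>i j. ereal (f (x, y)) \<le> c (i, j) + ereal (of_int i * x + of_int j * y))))"

definition V :: "pt set \<Rightarrow> (pt \<Rightarrow> real) set" where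
  "V \<Omega> = {f. tropical_series \<Omega> f}"

definition unit_dir :: "nat \<Rightarrow> pt" where
  "unit_dir k = (if k = 0 then (1, 0) else (0, 1))"

text \<open>C-infinity on an open set U: there is a family of functions D indexed by
multi-indices (lists over {0,1}), with D [] = f on U, each D alpha continuous on U, and
D (k # alpha) the partial derivative of D alpha in coordinate direction k on U.\<close>
definition smooth_on :: "pt set \<Rightarrow> (pt \<Rightarrow> real) \<Rightarrow> bool" where
  "smooth_on U f \<longleftrightarrow>
     (\<exists>D :: nat list \<Rightarrow> pt \<Rightarrow> real.
        (\<forall>p\<in>U. D [] p = f p) \<and>
        (\<forall>\<alpha>. continuous_on U (D \<alpha>)) \<and>
        (\<forall>\<alpha> k p. k \<in> {0, 1} \<longrightarrow> p \<in> U \<longrightarrow>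
           ((\<lambda>t. D \<alpha> (p + t *\<^sub>R unit_dir k)) has_real_derivative D (k # \<alpha>) p) (at 0)))"

definition tcurve :: "pt set \<Rightarrow> (pt \<Rightarrow> real) \<Rightarrow> pt set" where
  "tcurve \<Omega> f = {p \<in> interior \<Omega>.
      \<not> (\<exists>U. open U \<and> p \<in> U \<and> U \<subseteq> interior \<Omega> \<and> smooth_on U f)}"

definition G :: "pt set \<Rightarrow> pt set \<Rightarrow> (pt \<Rightarrow> real) \<Rightarrow> pt \<Rightarrow> real" where
  "G \<Omega> P f p = (if p \<in> \<Omega> then
      Inf {g p | g. g \<in> V \<Omega> \<and> (\<forall>q\<in>\<Omega>. f q \<le> g q) \<and> P \<subseteq> tcurve \<Omega> g}
    else 0)"

definition zero_fun :: "pt \<Rightarrow> real" where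
  "zero_fun = (\<lambda>_. 0)"

end

theory Submission
  imports Defs
begin

text \<open>Write a series as the minimum of its monomials with finite coefficients. Near an interior
  point only finitely many monomials can be active, since one of large slope would make the
  series negative nearby; hence the series is continuous, its curve is exactly where two
  monomials are active, and a smooth function stays a definite amount below any series with a
  kink at the same point. So the infimum of a nonempty family of \<open>\<Omega>\<close>-tropical series having
  \<open>P\<close> on their curves is again one, and \<open>G\<^sub>P 0\<close> is the least member of that family (or the
  family is empty and \<open>G\<^sub>P 0\<close> is constant).

  On a component \<open>U\<close> of the smooth locus \<open>G\<^sub>P 0\<close> equals a single monomial \<open>m\<close>; by concavity the
  set where the two agree is convex, and its interior lies in \<open>U\<close>. If the closure of \<open>U\<close> avoids
  \<open>\<partial>\<Omega>\<close>, then \<open>m > 0\<close> on \<open>\<Omega>\<close>, and if it also avoided \<open>P\<close>, replacing the series by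
  \<open>min(G\<^sub>P 0, m - \<epsilon>)\<close> would give a smaller member of the family.\<close>

definition lin :: "int \<times> int \<Rightarrow> pt \<Rightarrow> real" where
  "lin s x = of_int (fst s) * fst x + of_int (snd s) * snd x"

definition coord :: "int \<times> int \<Rightarrow> nat \<Rightarrow> int" where
  "coord s k = (if k = 0 then fst s else snd s)"

definition norm1 :: "int \<times> int \<Rightarrow> real" where
  "norm1 s = \<bar>of_int (fst s)\<bar> + \<bar>of_int (snd s)\<bar>"

lemma lin_add: "lin s (x + y) = lin s x + lin s y"
  by (simp add: lin_def algebra_simps)

lemma lin_diff: "lin s (x - y) = lin s x - lin s y"
  by (simp add: lin_def algebra_simps)

lemma lin_convex_comb: "lin s ((1 - t) *\<^sub>R x + t *\<^sub>R y) = (1 - t) * lin s x + t * lin s y"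
  by (simp add: lin_def algebra_simps)

lemma lin_scaleR_unit_dir: "lin s (t *\<^sub>R unit_dir k) = t * of_int (coord s k)"
  by (simp add: lin_def unit_dir_def coord_def)

lemma lin_zero [simp]: "lin (0, 0) x = 0"
  by (simp add: lin_def)

lemma continuous_on_lin [continuous_intros]: "continuous_on S (lin s)"
  unfolding lin_def by (intro continuous_intros)

lemma isCont_lin [continuous_intros]: "isCont (lin s) x"
  by (metis continuous_on_lin continuous_on_eq_continuous_at open_UNIV UNIV_I)

lemma abs_lin_le: "\<bar>lin s v\<bar> \<le> norm1 s * norm v"
proof -
  have "\<bar>lin s v\<bar> \<le> \<bar>of_int (fst s)\<bar> * \<bar>fst v\<bar> + \<bar>of_int (snd s)\<bar> * \<bar>snd v\<bar>"
    unfolding lin_def by (metis abs_mult abs_triangle_ineq)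
  also have "\<dots> \<le> \<bar>of_int (fst s)\<bar> * norm v + \<bar>of_int (snd s)\<bar> * norm v"
    using norm_fst_le[of "fst v" "snd v"] norm_snd_le[of "snd v" "fst v"]
    by (intro add_mono mult_left_mono) auto
  finally show ?thesis by (simp add: norm1_def algebra_simps)
qed

lemma norm1_eq_0_iff: "norm1 s = 0 \<longleftrightarrow> s = (0, 0)"
  by (cases s) (auto simp: norm1_def)

lemma coord_differs: "s1 \<noteq> s2 \<Longrightarrow> \<exists>k\<in>{0, 1}. coord s1 k \<noteq> coord s2 k"
  by (auto simp: coord_def prod_eq_iff)

lemma unit_dir_dist [simp]: "dist p (p + t *\<^sub>R unit_dir k) = \<bar>t\<bar>"
  by (simp add: dist_norm unit_dir_def)

text \<open>Evaluate at the corner of the inscribed square where the affine function is smallest.\<close>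
lemma affine_nonneg_on_cball_bound:
  assumes "R > 0" and nonneg: "\<forall>y\<in>cball x R. 0 \<le> c + lin s y"
  shows "R / 2 * norm1 s \<le> c + lin s x"
proof -
  define d where "d = (R / 2 * sgn (of_int (fst s) :: real), R / 2 * sgn (of_int (snd s) :: real))"
  have "norm d \<le> \<bar>R / 2 * sgn (of_int (fst s) :: real)\<bar> + \<bar>R / 2 * sgn (of_int (snd s) :: real)\<bar>"
    unfolding d_def by (rule order_trans[OF norm_Pair_le]) simp
  also have "\<dots> \<le> R"
    using \<open>R > 0\<close> by (auto simp: abs_mult abs_sgn_eq)
  finally have "x - d \<in> cball x R" by (simp add: dist_norm)
  hence "0 \<le> c + lin s x - lin s d" using nonneg[rule_format, of "x - d"] by (simp add: lin_diff)
  moreover have "lin s d = R / 2 * norm1 s"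
    unfolding lin_def d_def norm1_def by (simp add: algebra_simps sgn_if abs_if)
  ultimately show ?thesis by simp
qed

lemma smooth_on_affine:
  assumes "\<forall>x\<in>S. f x = c + lin s x"
  shows "smooth_on S f"
proof -
  define D where "D \<alpha> = (case \<alpha> of [] \<Rightarrow> (\<lambda>x. c + lin s x)
      | [k] \<Rightarrow> (\<lambda>x. of_int (coord s k)) | _ \<Rightarrow> (\<lambda>x. 0))" for \<alpha> :: "nat list"
  have "((\<lambda>t. D \<alpha> (p + t *\<^sub>R unit_dir k)) has_real_derivative D (k # \<alpha>) p) (at 0)" for \<alpha> k p
  proof (cases \<alpha>)
    case Nil
    have "(\<lambda>t. D \<alpha> (p + t *\<^sub>R unit_dir k)) = (\<lambda>t. c + lin s p + t * of_int (coord s k))"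
      by (simp add: Nil D_def lin_add lin_scaleR_unit_dir algebra_simps)
    then show ?thesis
      by (simp add: Nil D_def) (auto intro!: derivative_eq_intros)
  next
    case (Cons j \<beta>)
    then show ?thesis by (cases \<beta>) (auto simp: D_def)
  qed
  moreover have "continuous_on S (D \<alpha>)" for \<alpha>
    unfolding D_def by (auto split: list.split intro!: continuous_intros)
  ultimately show ?thesis
    unfolding smooth_on_def using assms by (intro exI[of _ D]) (auto simp: D_def)
qed

lemma open_smooth_locus: "open (interior \<Omega> - tcurve \<Omega> f)"
proof (subst open_subopen, intro ballI)
  fix q assume "q \<in> interior \<Omega> - tcurve \<Omega> f"
  then obtain U where "open U" "q \<in> U" "U \<subseteq> interior \<Omega>" "smooth_on U f"
    unfolding tcurve_def by blast
  moreover have "U \<subseteq> interior \<Omega> - tcurve \<Omega> f"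
    using calculation unfolding tcurve_def by blast
  ultimately show "\<exists>T. open T \<and> q \<in> T \<and> T \<subseteq> interior \<Omega> - tcurve \<Omega> f" by blast
qed

lemma smooth_on_subset_cong:
  assumes "smooth_on U g" "S \<subseteq> U" "\<forall>x\<in>S. f x = g x"
  shows "smooth_on S f"
proof -
  obtain D where D: "\<forall>p\<in>U. D [] p = g p" "\<forall>\<alpha>. continuous_on U (D \<alpha>)"
    "\<forall>\<alpha> k p. k \<in> {0, 1} \<longrightarrow> p \<in> U \<longrightarrow>
       ((\<lambda>t. D \<alpha> (p + t *\<^sub>R unit_dir k)) has_real_derivative D (k # \<alpha>) p) (at 0)"
    using assms(1) unfolding smooth_on_def by blast
  then show ?thesis
    unfolding smooth_on_def using assms(2,3) by (intro exI[of _ D]) (auto intro: continuous_on_subset)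
qed

lemma tcurve_eq_on_open:
  assumes "p \<in> tcurve \<Omega> f" "open W" "p \<in> W" "\<forall>x\<in>W. g x = f x"
  shows "p \<in> tcurve \<Omega> g"
proof -
  have False if "open U" "p \<in> U" "U \<subseteq> interior \<Omega>" "smooth_on U g" for U
  proof -
    have "smooth_on (U \<inter> W) f" using smooth_on_subset_cong[OF that(4)] assms(4) by auto
    moreover have "open (U \<inter> W)" "p \<in> U \<inter> W" "U \<inter> W \<subseteq> interior \<Omega>"
      using assms(2,3) that(1-3) by auto
    ultimately show False using assms(1) unfolding tcurve_def by blast
  qed
  then show ?thesis using assms(1) unfolding tcurve_def by blast
qed

text \<open>Real-coefficient form of an \<open>\<Omega>\<close>-tropical series: the monomials with coefficient
  \<open>+\<infinity>\<close> are dropped, leaving the support \<open>A\<close> and finite coefficients \<open>b\<close>.\<close>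
definition tropical_on :: "pt set \<Rightarrow> (int \<times> int) set \<Rightarrow> (int \<times> int \<Rightarrow> real) \<Rightarrow> (pt \<Rightarrow> real) \<Rightarrow> bool" where
  "tropical_on \<Omega> A b g \<longleftrightarrow> (\<forall>x\<in>interior \<Omega>.
     (\<exists>s\<in>A. g x = b s + lin s x) \<and> (\<forall>s\<in>A. g x \<le> b s + lin s x))"

lemma tropical_onD:
  assumes "tropical_on \<Omega> A b g" "x \<in> interior \<Omega>"
  shows "\<exists>s\<in>A. g x = b s + lin s x" and "s \<in> A \<Longrightarrow> g x \<le> b s + lin s x"
  using assms unfolding tropical_on_def by blast+

lemma tropical_series_imp_tropical_on:
  assumes "tropical_series \<Omega> g"
  obtains A b where "tropical_on \<Omega> A b g"
proof -
  obtain c :: "int \<times> int \<Rightarrow> ereal" where c_not_minf: "\<forall>i j. c (i, j) \<noteq> -\<infinity>" and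
    c: "\<forall>x y. (x, y) \<in> interior \<Omega> \<longrightarrow>
           (\<exists>i j. ereal (g (x, y)) = c (i, j) + ereal (of_int i * x + of_int j * y)) \<and>
           (\<forall>i j. ereal (g (x, y)) \<le> c (i, j) + ereal (of_int i * x + of_int j * y))"
    using assms unfolding tropical_series_def by blast
  define A where "A = {s. c s \<noteq> \<infinity>}"
  define b where "b s = real_of_ereal (c s)" for s
  have c_eq: "c s = ereal (b s)" if "s \<in> A" for s
    using that c_not_minf[rule_format, of "fst s" "snd s"] unfolding A_def b_def
    by (cases "c s") auto
  have "tropical_on \<Omega> A b g"
    unfolding tropical_on_def
  proof
    fix x assume "x \<in> interior \<Omega>"
    then obtain i j where
      eq: "ereal (g x) = c (i, j) + ereal (lin (i, j) x)" and
      le: "\<forall>i j. ereal (g x) \<le> c (i, j) + ereal (lin (i, j) x)"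
      using c[rule_format, of "fst x" "snd x"] by (auto simp: lin_def)
    have "(i, j) \<in> A" using eq unfolding A_def by auto
    moreover have "g x \<le> b s + lin s x" if "s \<in> A" for s
      using le[rule_format, of "fst s" "snd s"] c_eq[OF that] by simp
    ultimately show "(\<exists>s\<in>A. g x = b s + lin s x) \<and> (\<forall>s\<in>A. g x \<le> b s + lin s x)"
      using eq c_eq by fastforce
  qed
  then show thesis by (rule that)
qed

lemma tropical_series_if_tropical_on:
  assumes "tropical_on \<Omega> A b g" "\<forall>p\<in>\<Omega>. 0 \<le> g p" "\<forall>p\<in>frontier \<Omega>. g p = 0"
  shows "tropical_series \<Omega> g"
proof -
  define c where "c s = (if s \<in> A then ereal (b s) else \<infinity>)" for s
  have "(\<exists>i j. ereal (g (x, y)) = c (i, j) + ereal (of_int i * x + of_int j * y)) \<and>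
        (\<forall>i j. ereal (g (x, y)) \<le> c (i, j) + ereal (of_int i * x + of_int j * y))"
    if "(x, y) \<in> interior \<Omega>" for x y
    using tropical_onD[OF assms(1) that] by (force simp: c_def lin_def)
  then show ?thesis
    unfolding tropical_series_def using assms(2,3) by (intro conjI exI[of _ c]) (auto simp: c_def)
qed

lemma tropical_on_monomial_bound:
  assumes "tropical_on \<Omega> A b g" "\<forall>x\<in>interior \<Omega>. 0 \<le> g x"
    and "R > 0" "cball x R \<subseteq> interior \<Omega>" "s \<in> A"
  shows "R / 2 * norm1 s \<le> b s + lin s x"
proof (rule affine_nonneg_on_cball_bound[OF \<open>R > 0\<close>], intro ballI)
  fix y assume "y \<in> cball x R"
  with assms show "0 \<le> b s + lin s y"
    by (meson subsetD order_trans tropical_onD(2))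
qed

lemma norm1_bounded_finite: "finite {s :: int \<times> int. norm1 s \<le> C}"
proof (rule finite_subset)
  show "{s. norm1 s \<le> C} \<subseteq> {-\<lceil>C\<rceil>..\<lceil>C\<rceil>} \<times> {-\<lceil>C\<rceil>..\<lceil>C\<rceil>}"
    by (auto simp: norm1_def) linarith+
qed simp

text \<open>An active monomial of large slope would make the series negative somewhere in the disc.\<close>
lemma tropical_on_active_bounded:
  assumes tr: "tropical_on \<Omega> A b g" and nonneg: "\<forall>x\<in>interior \<Omega>. 0 \<le> g x"
    and p: "p \<in> interior \<Omega>"
  obtains R C where "R > 0" "ball p R \<subseteq> interior \<Omega>"
    "\<forall>x\<in>ball p R. \<forall>s\<in>A. g x = b s + lin s x \<longrightarrow> norm1 s \<le> C"
proof -
  obtain R where R: "R > 0" "cball p (2 * R) \<subseteq> interior \<Omega>"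
  proof -
    obtain e where "e > 0" "cball p e \<subseteq> interior \<Omega>"
      using p open_contains_cball[of "interior \<Omega>"] by auto
    then show thesis using that[of "e / 2"] by simp
  qed
  obtain s0 where s0: "s0 \<in> A" "g p = b s0 + lin s0 p" using tropical_onD(1)[OF tr p] by blast
  have "norm1 s \<le> 2 / R * (g p + norm1 s0 * R)"
    if x: "x \<in> ball p R" and s: "s \<in> A" "g x = b s + lin s x" for x s
  proof -
    have "cball x R \<subseteq> cball p (2 * R)"
    proof
      fix y assume "y \<in> cball x R"
      then show "y \<in> cball p (2 * R)" using x dist_triangle[of p y x] by simp
    qed
    with R have x_int: "x \<in> interior \<Omega>" and "cball x R \<subseteq> interior \<Omega>"
      by (auto dest: subsetD[of _ _ x] simp: \<open>R > 0\<close> less_imp_le)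
    then have "R / 2 * norm1 s \<le> g x"
      using tropical_on_monomial_bound[OF tr nonneg \<open>R > 0\<close> _ s(1)] s(2) by simp
    also have "\<dots> \<le> g p + lin s0 (x - p)"
      using tropical_onD(2)[OF tr x_int s0(1)] s0(2) by (simp add: lin_diff)
    also have "\<dots> \<le> g p + norm1 s0 * R"
      using abs_lin_le[of s0 "x - p"] x
      by (smt (verit) dist_norm mem_ball mult_left_mono norm1_def norm_minus_commute abs_ge_zero)
    finally show ?thesis using \<open>R > 0\<close> by (simp add: field_simps)
  qed
  moreover have "ball p R \<subseteq> interior \<Omega>" using R by auto
  ultimately show thesis using that \<open>R > 0\<close> by blast
qed

lemma tropical_on_active_near:
  assumes tr: "tropical_on \<Omega> A b g" and nonneg: "\<forall>x\<in>interior \<Omega>. 0 \<le> g x"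
    and p: "p \<in> interior \<Omega>"
  obtains r C where "r > 0" "ball p r \<subseteq> interior \<Omega>"
    "\<forall>x\<in>ball p r. \<forall>s\<in>A. g x = b s + lin s x \<longrightarrow> g p = b s + lin s p \<and> norm1 s \<le> C"
proof -
  obtain R C where R: "R > 0" "ball p R \<subseteq> interior \<Omega>"
    and bounded: "\<forall>x\<in>ball p R. \<forall>s\<in>A. g x = b s + lin s x \<longrightarrow> norm1 s \<le> C"
    using tropical_on_active_bounded[OF tr nonneg p] by blast
  obtain s0 where s0: "s0 \<in> A" "g p = b s0 + lin s0 p" using tropical_onD(1)[OF tr p] by blast
  define I where "I = {s\<in>A. norm1 s \<le> C \<and> g p < b s + lin s p}"
  have "finite I"
    using norm1_bounded_finite[of C] by (rule finite_subset[rotated]) (auto simp: I_def)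
  moreover have "\<forall>s\<in>I. \<forall>\<^sub>F x in at p. b s0 + lin s0 x < b s + lin s x"
  proof
    fix s assume "s \<in> I"
    have "((\<lambda>x. (b s + lin s x) - (b s0 + lin s0 x)) \<longlongrightarrow> (b s + lin s p) - (b s0 + lin s0 p)) (at p)"
      by (intro tendsto_intros isCont_lin[unfolded isCont_def])
    moreover have "0 < (b s + lin s p) - (b s0 + lin s0 p)" using \<open>s \<in> I\<close> s0 by (simp add: I_def)
    ultimately show "\<forall>\<^sub>F x in at p. b s0 + lin s0 x < b s + lin s x" by (rule order_tendstoD(1)[THEN eventually_mono]) simp
  qed
  ultimately have "\<forall>\<^sub>F x in at p. \<forall>s\<in>I. b s0 + lin s0 x < b s + lin s x"
    by (rule eventually_ball_finite)
  then obtain d where d: "d > 0"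
    "\<forall>x. 0 < dist x p \<and> dist x p < d \<longrightarrow> (\<forall>s\<in>I. b s0 + lin s0 x < b s + lin s x)"
    unfolding eventually_at by auto
  have "g p = b s + lin s p \<and> norm1 s \<le> C"
    if x: "x \<in> ball p (min d R)" and s: "s \<in> A" "g x = b s + lin s x" for x s
  proof
    show C: "norm1 s \<le> C" using bounded x s by auto
    show "g p = b s + lin s p"
    proof (cases "x = p")
      case False
      have "x \<in> interior \<Omega>" using x R by auto
      then have "b s + lin s x \<le> b s0 + lin s0 x" using tropical_onD(2)[OF tr _ s0(1)] s(2) by metis
      moreover have "0 < dist x p" "dist x p < d" using x False by (auto simp: dist_commute)
      ultimately have "s \<notin> I" using d(2) by fastforce
      then show ?thesis using tropical_onD(2)[OF tr p s(1)] s(1) C by (auto simp: I_def)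
    qed (use s in simp)
  qed
  moreover have "ball p (min d R) \<subseteq> interior \<Omega>" using R by auto
  ultimately show thesis using that[of "min d R" C] d R by auto
qed

lemma tropical_on_isCont:
  assumes tr: "tropical_on \<Omega> A b g" and nonneg: "\<forall>x\<in>interior \<Omega>. 0 \<le> g x"
    and p: "p \<in> interior \<Omega>"
  shows "isCont g p"
proof -
  obtain r C where r: "r > 0" "ball p r \<subseteq> interior \<Omega>"
    and near: "\<forall>x\<in>ball p r. \<forall>s\<in>A. g x = b s + lin s x \<longrightarrow> g p = b s + lin s p \<and> norm1 s \<le> C"
    using tropical_on_active_near[OF tr nonneg p] by blast
  have "norm (g x - g p) \<le> C * norm (x - p)" if "x \<in> ball p r" for x
  proof -
    have "x \<in> interior \<Omega>" using that r by auto
    then obtain s where s: "s \<in> A" "g x = b s + lin s x" using tropical_onD(1)[OF tr] by blast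
    then have "g x - g p = lin s (x - p)" "norm1 s \<le> C" using near that by (auto simp: lin_diff)
    moreover have "\<bar>lin s (x - p)\<bar> \<le> norm1 s * norm (x - p)" by (rule abs_lin_le)
    ultimately show ?thesis by (smt (verit) mult_right_mono norm_ge_zero real_norm_def)
  qed
  then have "\<forall>\<^sub>F x in at p. norm (g x - g p) \<le> C * norm (x - p)"
    using r(1) by (auto simp: eventually_at dist_commute intro!: exI[of _ r])
  moreover have "((\<lambda>x. C * norm (x - p)) \<longlongrightarrow> 0) (at p)"
    by (auto intro!: tendsto_eq_intros tendsto_ident_at)
  ultimately show ?thesis
    unfolding isCont_def by (subst LIM_zero_iff[symmetric]) (rule Lim_null_comparison)
qed

lemma tropical_on_unique_active_affine:
  assumes tr: "tropical_on \<Omega> A b g" and nonneg: "\<forall>x\<in>interior \<Omega>. 0 \<le> g x"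
    and q: "q \<in> interior \<Omega>" and s0: "s0 \<in> A"
    and unique: "\<forall>s\<in>A. g q = b s + lin s q \<longleftrightarrow> s = s0"
  obtains r where "r > 0" "ball q r \<subseteq> interior \<Omega>" "\<forall>x\<in>ball q r. g x = b s0 + lin s0 x"
proof -
  obtain r C where r: "r > 0" "ball q r \<subseteq> interior \<Omega>"
    and near: "\<forall>x\<in>ball q r. \<forall>s\<in>A. g x = b s + lin s x \<longrightarrow> g q = b s + lin s q \<and> norm1 s \<le> C"
    using tropical_on_active_near[OF tr nonneg q] by blast
  have "g x = b s0 + lin s0 x" if "x \<in> ball q r" for x
  proof -
    have "x \<in> interior \<Omega>" using that r by auto
    then obtain s where "s \<in> A" "g x = b s + lin s x" using tropical_onD(1)[OF tr] by blast
    with near that unique show ?thesis by metis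
  qed
  then show thesis using that r by blast
qed

text \<open>The line of slope \<open>a\<close> through \<open>(0, c)\<close> lies above \<open>\<phi>\<close> at \<open>\<plusminus>\<tau>\<close>; as \<open>\<phi>\<close> stays within
  \<open>\<tau>/4\<close> of its tangent there and \<open>\<bar>a - d\<bar> \<ge> 1/2\<close>, the line clears \<open>\<phi> 0\<close> by \<open>\<tau>/4\<close>.\<close>
lemma derivative_gap:
  fixes \<phi> :: "real \<Rightarrow> real"
  assumes "(\<phi> has_real_derivative d) (at 0)"
  obtains \<tau>0 where "\<tau>0 > 0"
    "\<And>\<tau> a c. 0 < \<tau> \<Longrightarrow> \<tau> < \<tau>0 \<Longrightarrow> 1/2 \<le> \<bar>d - a\<bar> \<Longrightarrow>
       \<phi> \<tau> \<le> c + a * \<tau> \<Longrightarrow> \<phi> (-\<tau>) \<le> c - a * \<tau> \<Longrightarrow> \<phi> 0 + \<tau> / 4 \<le> c"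
proof -
  have "((\<lambda>t. (\<phi> t - \<phi> 0) / (t - 0)) \<longlongrightarrow> d) (at 0)"
    using assms by (simp add: has_field_derivative_iff)
  from tendstoD[OF this, of "1/4"] obtain \<tau>0 where "\<tau>0 > 0"
    and slope: "\<And>t. 0 < dist t 0 \<Longrightarrow> dist t 0 < \<tau>0 \<Longrightarrow> dist ((\<phi> t - \<phi> 0) / (t - 0)) d < 1/4"
    unfolding eventually_at by auto
  have approx: "\<bar>\<phi> t - \<phi> 0 - d * t\<bar> \<le> \<bar>t\<bar> / 4" if "0 < \<bar>t\<bar>" "\<bar>t\<bar> < \<tau>0" for t
  proof -
    have "\<bar>(\<phi> t - \<phi> 0) / t - d\<bar> \<le> 1/4" using slope[of t] that by (simp add: dist_real_def)
    then have "\<bar>(\<phi> t - \<phi> 0) / t - d\<bar> * \<bar>t\<bar> \<le> 1/4 * \<bar>t\<bar>" by (rule mult_right_mono) simp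
    moreover have "\<bar>(\<phi> t - \<phi> 0) / t - d\<bar> * \<bar>t\<bar> = \<bar>\<phi> t - \<phi> 0 - d * t\<bar>"
      using that(1) by (simp add: abs_mult[symmetric] field_simps)
    ultimately show ?thesis by simp
  qed
  have "\<phi> 0 + \<tau> / 4 \<le> c"
    if \<tau>: "0 < \<tau>" "\<tau> < \<tau>0" and da: "1/2 \<le> \<bar>d - a\<bar>"
      and right: "\<phi> \<tau> \<le> c + a * \<tau>" and left: "\<phi> (-\<tau>) \<le> c - a * \<tau>" for \<tau> a c
  proof (cases "1/2 \<le> d - a")
    case True
    have "\<tau> / 2 \<le> (d - a) * \<tau>" using mult_right_mono[OF True] \<tau> by simp
    moreover have "\<phi> 0 + d * \<tau> - \<tau> / 4 \<le> \<phi> \<tau>" using approx[of \<tau>] \<tau> by arith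
    ultimately show ?thesis using right by (simp add: algebra_simps)
  next
    case False
    with da have "1/2 \<le> a - d" by arith
    then have "\<tau> / 2 \<le> (a - d) * \<tau>" using mult_right_mono[of "1/2" "a - d" \<tau>] \<tau> by simp
    moreover have "\<phi> 0 - d * \<tau> - \<tau> / 4 \<le> \<phi> (-\<tau>)" using approx[of "-\<tau>"] \<tau> by arith
    ultimately show ?thesis using left by (simp add: algebra_simps)
  qed
  with \<open>\<tau>0 > 0\<close> show thesis using that by blast
qed

text \<open>The two integer slopes in direction \<open>k\<close> differ by at least \<open>1\<close>, so one of them is at
  distance \<open>\<ge> 1/2\<close> from the partial derivative and the derivative gap applies to it.\<close>
lemma smooth_on_coord_gap:
  assumes U: "open U" "p \<in> U" and smooth: "smooth_on U f" and k: "k \<in> {0, 1}"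
  obtains \<kappa> where "\<kappa> > 0"
    "\<And>g s1 s2. coord s1 k \<noteq> coord s2 k \<Longrightarrow> \<forall>x\<in>U. f x \<le> g x \<Longrightarrow>
       \<forall>x\<in>U. g x \<le> g p + lin s1 (x - p) \<Longrightarrow> \<forall>x\<in>U. g x \<le> g p + lin s2 (x - p) \<Longrightarrow>
       f p + \<kappa> \<le> g p"
proof -
  obtain D where D_eq: "\<forall>p\<in>U. D [] p = f p" and
    deriv: "((\<lambda>t. D [] (p + t *\<^sub>R unit_dir k)) has_real_derivative D [k] p) (at 0)"
    using smooth k U(2) unfolding smooth_on_def by blast
  obtain \<tau>0 where "\<tau>0 > 0" and gap: "\<And>\<tau> a c. 0 < \<tau> \<Longrightarrow> \<tau> < \<tau>0 \<Longrightarrow> 1/2 \<le> \<bar>D [k] p - a\<bar> \<Longrightarrow>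
       D [] (p + \<tau> *\<^sub>R unit_dir k) \<le> c + a * \<tau> \<Longrightarrow> D [] (p + (-\<tau>) *\<^sub>R unit_dir k) \<le> c - a * \<tau> \<Longrightarrow>
       D [] (p + 0 *\<^sub>R unit_dir k) + \<tau> / 4 \<le> c"
    by (rule derivative_gap[OF deriv], rule that) assumption+
  obtain e where "e > 0" "ball p e \<subseteq> U" using U open_contains_ball by blast
  define \<tau> where "\<tau> = min \<tau>0 e / 2"
  have \<tau>: "0 < \<tau>" "\<tau> < \<tau>0" using \<open>\<tau>0 > 0\<close> \<open>e > 0\<close> by (auto simp: \<tau>_def)
  have \<tau>_in_U: "p + t *\<^sub>R unit_dir k \<in> U" if "\<bar>t\<bar> = \<tau>" for t
    using \<open>ball p e \<subseteq> U\<close> \<open>e > 0\<close> that by (auto simp: \<tau>_def)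
  have "f p + \<tau> / 4 \<le> g p"
    if coord_ne: "coord s1 k \<noteq> coord s2 k" and f_le: "\<forall>x\<in>U. f x \<le> g x"
      and below: "\<forall>x\<in>U. g x \<le> g p + lin s1 (x - p)" "\<forall>x\<in>U. g x \<le> g p + lin s2 (x - p)"
    for g s1 s2
  proof -
    obtain s where s: "s \<in> {s1, s2}" "1/2 \<le> \<bar>D [k] p - of_int (coord s k)\<bar>"
    proof (cases "1/2 \<le> \<bar>D [k] p - of_int (coord s1 k)\<bar>")
      case False
      have "1 \<le> \<bar>real_of_int (coord s1 k) - of_int (coord s2 k)\<bar>" using coord_ne by linarith
      with False have "1/2 \<le> \<bar>D [k] p - of_int (coord s2 k)\<bar>" by arith
      then show thesis using that[of s2] by simp
    qed (use that[of s1] in simp)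
    have "D [] (p + t *\<^sub>R unit_dir k) \<le> g p + of_int (coord s k) * t" if "\<bar>t\<bar> = \<tau>" for t
    proof -
      have x: "p + t *\<^sub>R unit_dir k \<in> U" using \<tau>_in_U[OF that] .
      have "D [] (p + t *\<^sub>R unit_dir k) \<le> g (p + t *\<^sub>R unit_dir k)"
        using D_eq f_le x by simp
      also have "\<dots> \<le> g p + lin s (p + t *\<^sub>R unit_dir k - p)" using below s(1) x by auto
      finally show ?thesis by (simp add: lin_scaleR_unit_dir mult.commute)
    qed
    from this[of \<tau>] this[of "-\<tau>"] have "D [] p + \<tau> / 4 \<le> g p"
      using gap[OF \<tau> s(2)] \<tau>(1) by simp
    then show ?thesis using D_eq U(2) by simp
  qed
  then show thesis using that[of "\<tau> / 4"] \<tau>(1) by simp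
qed

lemma smooth_on_gap:
  assumes "open U" "p \<in> U" "smooth_on U f"
  obtains \<kappa> where "\<kappa> > 0"
    "\<And>g s1 s2. s1 \<noteq> s2 \<Longrightarrow> \<forall>x\<in>U. f x \<le> g x \<Longrightarrow>
       \<forall>x\<in>U. g x \<le> g p + lin s1 (x - p) \<Longrightarrow> \<forall>x\<in>U. g x \<le> g p + lin s2 (x - p) \<Longrightarrow>
       f p + \<kappa> \<le> g p"
proof -
  obtain \<kappa>0 where "\<kappa>0 > 0" and gap0: "\<And>g s1 s2. coord s1 0 \<noteq> coord s2 0 \<Longrightarrow> \<forall>x\<in>U. f x \<le> g x \<Longrightarrow>
       \<forall>x\<in>U. g x \<le> g p + lin s1 (x - p) \<Longrightarrow> \<forall>x\<in>U. g x \<le> g p + lin s2 (x - p) \<Longrightarrow>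
       f p + \<kappa>0 \<le> g p"
    by (rule smooth_on_coord_gap[OF assms, of 0]) auto
  obtain \<kappa>1 where "\<kappa>1 > 0" and gap1: "\<And>g s1 s2. coord s1 1 \<noteq> coord s2 1 \<Longrightarrow> \<forall>x\<in>U. f x \<le> g x \<Longrightarrow>
       \<forall>x\<in>U. g x \<le> g p + lin s1 (x - p) \<Longrightarrow> \<forall>x\<in>U. g x \<le> g p + lin s2 (x - p) \<Longrightarrow>
       f p + \<kappa>1 \<le> g p"
    by (rule smooth_on_coord_gap[OF assms, of 1]) auto
  show thesis
  proof (rule that[of "min \<kappa>0 \<kappa>1"])
    fix g s1 s2 assume "s1 \<noteq> s2" and hyps: "\<forall>x\<in>U. f x \<le> g x"
      "\<forall>x\<in>U. g x \<le> g p + lin s1 (x - p)" "\<forall>x\<in>U. g x \<le> g p + lin s2 (x - p)"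
    obtain k where "k \<in> {0, 1}" "coord s1 k \<noteq> coord s2 k"
      using coord_differs[OF \<open>s1 \<noteq> s2\<close>] by blast
    then have "f p + \<kappa>0 \<le> g p \<or> f p + \<kappa>1 \<le> g p"
      using gap0[OF _ hyps] gap1[OF _ hyps] by auto
    then show "f p + min \<kappa>0 \<kappa>1 \<le> g p" by linarith
  qed (use \<open>\<kappa>0 > 0\<close> \<open>\<kappa>1 > 0\<close> in simp)
qed

lemma tropical_on_kink_gap:
  assumes "open U" "p \<in> U" "U \<subseteq> interior \<Omega>" "smooth_on U f"
  obtains \<kappa> where "\<kappa> > 0"
    "\<And>A b g s1 s2. tropical_on \<Omega> A b g \<Longrightarrow> \<forall>x\<in>U. f x \<le> g x \<Longrightarrow>
       s1 \<in> A \<Longrightarrow> s2 \<in> A \<Longrightarrow> s1 \<noteq> s2 \<Longrightarrow> g p = b s1 + lin s1 p \<Longrightarrow> g p = b s2 + lin s2 p \<Longrightarrow>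
       f p + \<kappa> \<le> g p"
proof -
  obtain \<kappa> where \<kappa>: "\<kappa> > 0"
    "\<And>g s1 s2. s1 \<noteq> s2 \<Longrightarrow> \<forall>x\<in>U. f x \<le> g x \<Longrightarrow>
       \<forall>x\<in>U. g x \<le> g p + lin s1 (x - p) \<Longrightarrow> \<forall>x\<in>U. g x \<le> g p + lin s2 (x - p) \<Longrightarrow>
       f p + \<kappa> \<le> g p"
    using smooth_on_gap[OF assms(1,2,4)] by blast
  have "\<forall>x\<in>U. g x \<le> g p + lin s (x - p)"
    if "tropical_on \<Omega> A b g" "s \<in> A" "g p = b s + lin s p" for A b g s
    using tropical_onD(2)[OF that(1) _ that(2)] that(3) assms(3) by (auto simp: lin_diff)
  note below = this
  show thesis
  proof (rule that[OF \<kappa>(1)])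
    fix A b g s1 s2
    assume "tropical_on \<Omega> A b g" "\<forall>x\<in>U. f x \<le> g x" "s1 \<in> A" "s2 \<in> A" "s1 \<noteq> s2"
      "g p = b s1 + lin s1 p" "g p = b s2 + lin s2 p"
    then show "f p + \<kappa> \<le> g p" using \<kappa>(2) below by blast
  qed
qed

lemma tcurve_tropical_on_iff:
  assumes tr: "tropical_on \<Omega> A b g" and nonneg: "\<forall>x\<in>interior \<Omega>. 0 \<le> g x"
  shows "q \<in> tcurve \<Omega> g \<longleftrightarrow> q \<in> interior \<Omega> \<and>
           (\<exists>s1\<in>A. \<exists>s2\<in>A. s1 \<noteq> s2 \<and> g q = b s1 + lin s1 q \<and> g q = b s2 + lin s2 q)"
proof (cases "q \<in> interior \<Omega>")
  case q: True
  show ?thesis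
  proof
    assume q_curve: "q \<in> tcurve \<Omega> g"
    obtain s0 where s0: "s0 \<in> A" "g q = b s0 + lin s0 q" using tropical_onD(1)[OF tr q] by blast
    show "q \<in> interior \<Omega> \<and> (\<exists>s1\<in>A. \<exists>s2\<in>A. s1 \<noteq> s2 \<and> g q = b s1 + lin s1 q \<and> g q = b s2 + lin s2 q)"
    proof (rule ccontr)
      assume "\<not> ?thesis"
      then have unique: "\<forall>s\<in>A. g q = b s + lin s q \<longleftrightarrow> s = s0" using q s0 by metis
      obtain r where r: "r > 0" "ball q r \<subseteq> interior \<Omega>" "\<forall>x\<in>ball q r. g x = b s0 + lin s0 x"
        by (rule tropical_on_unique_active_affine[OF tr nonneg q s0(1) unique])
      then have "open (ball q r)" "q \<in> ball q r" "smooth_on (ball q r) g"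
        using smooth_on_affine[of "ball q r" g "b s0" s0] by auto
      then show False using q_curve r(2) unfolding tcurve_def by blast
    qed
  next
    assume "q \<in> interior \<Omega> \<and> (\<exists>s1\<in>A. \<exists>s2\<in>A. s1 \<noteq> s2 \<and> g q = b s1 + lin s1 q \<and> g q = b s2 + lin s2 q)"
    then obtain s1 s2 where s: "s1 \<in> A" "s2 \<in> A" "s1 \<noteq> s2" "g q = b s1 + lin s1 q" "g q = b s2 + lin s2 q"
      by blast
    have False if U: "open U" "q \<in> U" "U \<subseteq> interior \<Omega>" "smooth_on U g" for U
    proof -
      obtain \<kappa> where "\<kappa> > 0" and gap: "\<And>A b h s1 s2. tropical_on \<Omega> A b h \<Longrightarrow>
          \<forall>x\<in>U. g x \<le> h x \<Longrightarrow> s1 \<in> A \<Longrightarrow> s2 \<in> A \<Longrightarrow> s1 \<noteq> s2 \<Longrightarrow>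
          h q = b s1 + lin s1 q \<Longrightarrow> h q = b s2 + lin s2 q \<Longrightarrow> g q + \<kappa> \<le> h q"
        by (rule tropical_on_kink_gap[OF U], rule that) assumption+
      have "g q + \<kappa> \<le> g q" by (rule gap[OF tr _ s]) simp
      then show False using \<open>\<kappa> > 0\<close> by simp
    qed
    then show "q \<in> tcurve \<Omega> g" using q unfolding tcurve_def by blast
  qed
qed (simp add: tcurve_def)

text \<open>Members close to the infimum at \<open>x\<close> are active at \<open>x\<close> only through finitely many
  monomials, so the infimum is attained by a monomial of any lower envelope \<open>c\<close> of the
  coefficients that stays above it.\<close>
lemma Inf_attained_by_envelope:
  assumes "F \<noteq> {}" and tr: "\<forall>g\<in>F. tropical_on \<Omega> (AA g) (bb g) g"
    and nonneg: "\<forall>g\<in>F. \<forall>x\<in>interior \<Omega>. 0 \<le> g x"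
    and x: "x \<in> interior \<Omega>" and fx: "f x = Inf ((\<lambda>g. g x) ` F)"
    and above: "\<forall>s\<in>(\<Union>g\<in>F. AA g). f x \<le> c s + lin s x"
    and envelope: "\<forall>g\<in>F. \<forall>s\<in>AA g. c s \<le> bb g s"
  shows "\<exists>s\<in>(\<Union>g\<in>F. AA g). f x = c s + lin s x"
proof (rule ccontr)
  assume no_touch: "\<not> ?thesis"
  have Inf_less: "\<exists>g\<in>F. g x < a" if "f x < a" for a
  proof -
    have "bdd_below ((\<lambda>g. g x) ` F)" using nonneg x by (intro bdd_belowI[of _ 0]) auto
    then show ?thesis using that fx cInf_less_iff[of "(\<lambda>g. g x) ` F" a] \<open>F \<noteq> {}\<close> by auto
  qed
  obtain R where R: "R > 0" "cball x R \<subseteq> interior \<Omega>"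
    using x open_contains_cball[of "interior \<Omega>"] by auto
  define T where "T = {s\<in>(\<Union>g\<in>F. AA g). norm1 s \<le> 2 / R * (f x + 1)}"
  have "finite T"
    using norm1_bounded_finite by (rule finite_subset[rotated]) (auto simp: T_def)
  have in_T: "s \<in> T" if g: "g \<in> F" "g x < f x + 1" and s: "s \<in> AA g" "g x = bb g s + lin s x" for g s
  proof -
    have "R / 2 * norm1 s \<le> g x"
      using tropical_on_monomial_bound[of \<Omega> "AA g" "bb g" g R x s] tr nonneg g(1) R s by simp
    then show ?thesis using g s R(1) by (auto simp: T_def field_simps)
  qed
  have less: "\<forall>s\<in>T. f x < c s + lin s x" using above no_touch unfolding T_def by force
  obtain g0 where g0: "g0 \<in> F" "g0 x < f x + 1" using Inf_less[of "f x + 1"] by auto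
  then obtain s0 where "s0 \<in> AA g0" "g0 x = bb g0 s0 + lin s0 x"
    using tropical_onD(1)[OF bspec[OF tr g0(1)] x] by blast
  then have "T \<noteq> {}" using in_T[OF g0] by blast
  define \<mu> where "\<mu> = Min ((\<lambda>s. c s + lin s x) ` T)"
  have "f x < \<mu>" unfolding \<mu>_def using \<open>finite T\<close> \<open>T \<noteq> {}\<close> less by simp
  then obtain g where g: "g \<in> F" "g x < min \<mu> (f x + 1)"
    using Inf_less[of "min \<mu> (f x + 1)"] by auto
  then obtain s where s: "s \<in> AA g" "g x = bb g s + lin s x"
    using tropical_onD(1)[OF bspec[OF tr g(1)] x] by blast
  have "s \<in> T" using in_T[of g s] g s by simp
  then have "\<mu> \<le> c s + lin s x" unfolding \<mu>_def using \<open>finite T\<close> by simp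
  also have "\<dots> \<le> g x" using envelope g(1) s by simp
  finally show False using g by simp
qed

lemma tropical_on_Inf:
  assumes "F \<noteq> {}" and tr: "\<forall>g\<in>F. tropical_on \<Omega> (AA g) (bb g) g"
    and nonneg: "\<forall>g\<in>F. \<forall>x\<in>interior \<Omega>. 0 \<le> g x"
    and f: "\<forall>x\<in>interior \<Omega>. f x = Inf ((\<lambda>g. g x) ` F)" and "interior \<Omega> \<noteq> {}"
  shows "tropical_on \<Omega> (\<Union>g\<in>F. AA g) (\<lambda>s. Inf ((\<lambda>g. bb g s) ` {g\<in>F. s \<in> AA g})) f"
proof -
  define bf where "bf s = Inf ((\<lambda>g. bb g s) ` {g\<in>F. s \<in> AA g})" for s
  obtain y0 where y0: "y0 \<in> interior \<Omega>" using \<open>interior \<Omega> \<noteq> {}\<close> by blast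
  have "bdd_below ((\<lambda>g. bb g s) ` {g\<in>F. s \<in> AA g})" for s
  proof (rule bdd_belowI[of _ "- lin s y0"], clarify)
    fix g assume "g \<in> F" "s \<in> AA g"
    then have "0 \<le> bb g s + lin s y0"
      using nonneg tropical_onD(2)[OF _ y0, of "AA g" "bb g" g s] tr by (meson order_trans y0)
    then show "- lin s y0 \<le> bb g s" by simp
  qed
  then have envelope: "\<forall>g\<in>F. \<forall>s\<in>AA g. bf s \<le> bb g s"
    unfolding bf_def by (auto intro: cInf_lower)
  have above: "f x \<le> bf s + lin s x" if x: "x \<in> interior \<Omega>" and "s \<in> (\<Union>g\<in>F. AA g)" for x s
  proof -
    have "f x - lin s x \<le> bf s" unfolding bf_def
    proof (rule cInf_greatest)
      show "(\<lambda>g. bb g s) ` {g\<in>F. s \<in> AA g} \<noteq> {}" using \<open>s \<in> (\<Union>g\<in>F. AA g)\<close> by auto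
    next
      fix c assume "c \<in> (\<lambda>g. bb g s) ` {g\<in>F. s \<in> AA g}"
      then obtain g where g: "g \<in> F" "s \<in> AA g" "c = bb g s" by blast
      have "bdd_below ((\<lambda>g. g x) ` F)" using nonneg x by (intro bdd_belowI[of _ 0]) auto
      then have "f x \<le> g x" using f x g(1) by (auto intro: cInf_lower)
      also have "\<dots> \<le> bb g s + lin s x" using tropical_onD(2)[OF _ x g(2)] tr g(1) by blast
      finally show "f x - lin s x \<le> c" using g(3) by simp
    qed
    then show ?thesis by simp
  qed
  have "\<exists>s\<in>(\<Union>g\<in>F. AA g). f x = bf s + lin s x" if "x \<in> interior \<Omega>" for x
    using Inf_attained_by_envelope[OF \<open>F \<noteq> {}\<close> tr nonneg that] f above envelope that by blast
  with above show ?thesis unfolding tropical_on_def bf_def by blast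
qed

lemma tropical_series_Inf:
  assumes "F \<noteq> {}" "\<forall>g\<in>F. tropical_series \<Omega> g" "closed \<Omega>" "interior \<Omega> \<noteq> {}"
    and f: "\<forall>x\<in>\<Omega>. f x = Inf ((\<lambda>g. g x) ` F)"
  shows "tropical_series \<Omega> f"
proof -
  have nonneg: "\<forall>g\<in>F. \<forall>x\<in>\<Omega>. 0 \<le> g x" and frontier: "\<forall>g\<in>F. \<forall>x\<in>frontier \<Omega>. g x = 0"
    using assms(2) unfolding tropical_series_def by blast+
  have "\<forall>g\<in>F. \<exists>Ab. tropical_on \<Omega> (fst Ab) (snd Ab) g"
    using assms(2) tropical_series_imp_tropical_on by (metis fst_conv snd_conv)
  then obtain Ab where "\<forall>g\<in>F. tropical_on \<Omega> (fst (Ab g)) (snd (Ab g)) g" by metis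
  moreover have "\<forall>g\<in>F. \<forall>x\<in>interior \<Omega>. 0 \<le> g x" "\<forall>x\<in>interior \<Omega>. f x = Inf ((\<lambda>g. g x) ` F)"
    using nonneg f interior_subset by blast+
  ultimately have "tropical_on \<Omega> (\<Union>g\<in>F. fst (Ab g))
      (\<lambda>s. Inf ((\<lambda>g. snd (Ab g) s) ` {g\<in>F. s \<in> fst (Ab g)})) f"
    by (rule tropical_on_Inf[OF \<open>F \<noteq> {}\<close> _ _ _ \<open>interior \<Omega> \<noteq> {}\<close>])
  moreover have "\<forall>x\<in>\<Omega>. 0 \<le> f x"
    using f nonneg \<open>F \<noteq> {}\<close> by (auto intro: cInf_greatest)
  moreover have "\<forall>x\<in>frontier \<Omega>. f x = 0"
  proof
    fix x assume x: "x \<in> frontier \<Omega>"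
    then have "(\<lambda>g. g x) ` F = {0}" using frontier \<open>F \<noteq> {}\<close> by force
    moreover have "x \<in> \<Omega>" using x \<open>closed \<Omega>\<close> frontier_subset_closed by blast
    ultimately show "f x = 0" using f by simp
  qed
  ultimately show ?thesis by (rule tropical_series_if_tropical_on)
qed

lemma tcurve_Inf:
  assumes "F \<noteq> {}" and series: "\<forall>g\<in>F. tropical_series \<Omega> g"
    and f: "\<forall>x\<in>interior \<Omega>. f x = Inf ((\<lambda>g. g x) ` F)"
    and p: "p \<in> interior \<Omega>" "\<forall>g\<in>F. p \<in> tcurve \<Omega> g"
  shows "p \<in> tcurve \<Omega> f"
proof (rule ccontr)
  assume "p \<notin> tcurve \<Omega> f"
  then obtain U where U: "open U" "p \<in> U" "U \<subseteq> interior \<Omega>" "smooth_on U f"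
    using p unfolding tcurve_def by blast
  obtain \<kappa> where "\<kappa> > 0" and gap: "\<And>A b g s1 s2. tropical_on \<Omega> A b g \<Longrightarrow>
      \<forall>x\<in>U. f x \<le> g x \<Longrightarrow> s1 \<in> A \<Longrightarrow> s2 \<in> A \<Longrightarrow> s1 \<noteq> s2 \<Longrightarrow>
      g p = b s1 + lin s1 p \<Longrightarrow> g p = b s2 + lin s2 p \<Longrightarrow> f p + \<kappa> \<le> g p"
    by (rule tropical_on_kink_gap[OF U], rule that) assumption+
  have nonneg: "\<forall>x\<in>interior \<Omega>. 0 \<le> g x" if "g \<in> F" for g
    using series that interior_subset unfolding tropical_series_def by blast
  have "f p + \<kappa> \<le> g p" if g: "g \<in> F" for g
  proof -
    obtain A b where tr: "tropical_on \<Omega> A b g"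
      using tropical_series_imp_tropical_on series g by metis
    have "p \<in> tcurve \<Omega> g" using p(2) g by blast
    then obtain s1 s2 where "s1 \<in> A" "s2 \<in> A" "s1 \<noteq> s2" "g p = b s1 + lin s1 p" "g p = b s2 + lin s2 p"
      unfolding tcurve_tropical_on_iff[OF tr nonneg[OF g]] by blast
    moreover have "\<forall>x\<in>U. f x \<le> g x"
    proof
      fix x assume "x \<in> U"
      then have "x \<in> interior \<Omega>" using U(3) by blast
      moreover have "bdd_below ((\<lambda>g. g x) ` F)" using nonneg calculation by (auto intro!: bdd_belowI[of _ 0])
      ultimately show "f x \<le> g x" using f g by (simp add: cInf_lower)
    qed
    ultimately show ?thesis using gap[OF tr] by blast
  qed
  then have "f p + \<kappa> \<le> Inf ((\<lambda>g. g p) ` F)" using \<open>F \<noteq> {}\<close> by (intro cInf_greatest) auto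
  then show False using f p(1) \<open>\<kappa> > 0\<close> by simp
qed

definition G_family :: "pt set \<Rightarrow> pt set \<Rightarrow> (pt \<Rightarrow> real) \<Rightarrow> (pt \<Rightarrow> real) set" where
  "G_family \<Omega> P f = {g. g \<in> V \<Omega> \<and> (\<forall>q\<in>\<Omega>. f q \<le> g q) \<and> P \<subseteq> tcurve \<Omega> g}"

lemma G_eq_Inf:
  assumes "x \<in> \<Omega>"
  shows "G \<Omega> P f x = Inf ((\<lambda>g. g x) ` G_family \<Omega> P f)"
proof -
  have "{g x |g. g \<in> V \<Omega> \<and> (\<forall>q\<in>\<Omega>. f q \<le> g q) \<and> P \<subseteq> tcurve \<Omega> g} = (\<lambda>g. g x) ` G_family \<Omega> P f"
    unfolding G_family_def by blast
  then show ?thesis using assms unfolding G_def by simp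
qed

lemma G_le:
  assumes "x \<in> \<Omega>" "g \<in> G_family \<Omega> P f"
  shows "G \<Omega> P f x \<le> g x"
proof -
  have "bdd_below ((\<lambda>g. g x) ` G_family \<Omega> P f)"
    using assms(1) by (intro bdd_belowI[of _ "f x"]) (auto simp: G_family_def)
  then show ?thesis using assms by (simp add: G_eq_Inf cInf_lower)
qed

lemma G_zero_in_G_family:
  assumes "closed \<Omega>" "interior \<Omega> \<noteq> {}" "P \<subseteq> interior \<Omega>" "G_family \<Omega> P zero_fun \<noteq> {}"
  shows "G \<Omega> P zero_fun \<in> G_family \<Omega> P zero_fun"
proof -
  let ?F = "G_family \<Omega> P zero_fun"
  have series: "\<forall>g\<in>?F. tropical_series \<Omega> g" by (simp add: G_family_def V_def)
  have Inf: "\<forall>x\<in>\<Omega>. G \<Omega> P zero_fun x = Inf ((\<lambda>g. g x) ` ?F)" by (simp add: G_eq_Inf)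
  have "tropical_series \<Omega> (G \<Omega> P zero_fun)"
    by (rule tropical_series_Inf[OF assms(4) series assms(1,2) Inf])
  moreover have "P \<subseteq> tcurve \<Omega> (G \<Omega> P zero_fun)"
  proof
    fix p assume "p \<in> P"
    show "p \<in> tcurve \<Omega> (G \<Omega> P zero_fun)"
    proof (rule tcurve_Inf[OF assms(4) series])
      show "\<forall>x\<in>interior \<Omega>. G \<Omega> P zero_fun x = Inf ((\<lambda>g. g x) ` ?F)"
        using Inf interior_subset by blast
      show "p \<in> interior \<Omega>" "\<forall>g\<in>?F. p \<in> tcurve \<Omega> g"
        using \<open>p \<in> P\<close> assms(3) by (auto simp: G_family_def)
    qed
  qed
  ultimately show ?thesis
    by (auto simp: G_family_def V_def zero_fun_def tropical_series_def)
qed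

lemma components_smooth_locus_const:
  assumes "compact \<Omega>" "convex \<Omega>" "interior \<Omega> \<noteq> {}" "\<forall>x\<in>interior \<Omega>. f x = c"
  shows "\<forall>U\<in>components (interior \<Omega> - tcurve \<Omega> f). closure U \<inter> frontier \<Omega> \<noteq> {}"
proof -
  have "smooth_on (interior \<Omega>) f" using assms(4) by (intro smooth_on_affine[of _ _ c "(0,0)"]) simp
  then have "tcurve \<Omega> f = {}" unfolding tcurve_def by auto
  moreover have "components (interior \<Omega>) = {interior \<Omega>}"
    using assms(2,3) by (simp add: components_eq_sing_iff convex_connected convex_interior)
  moreover have "closure (interior \<Omega>) = \<Omega>"
    using assms(1-3) by (simp add: convex_closure_interior compact_imp_closed)
  moreover have "frontier \<Omega> \<noteq> {}"
  proof (rule frontier_not_empty)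
    show "\<Omega> \<noteq> {}" using assms(3) interior_subset by blast
    show "\<Omega> \<noteq> UNIV" using assms(1) compact_imp_bounded not_bounded_UNIV by blast
  qed
  moreover have "frontier \<Omega> \<subseteq> \<Omega>" using assms(1) by (simp add: compact_imp_closed frontier_subset_closed)
  ultimately show ?thesis by auto
qed

lemma tropical_on_monomial_nonneg:
  assumes "convex \<Omega>" "closed \<Omega>" "interior \<Omega> \<noteq> {}"
    and tr: "tropical_on \<Omega> A b f" and nonneg: "\<forall>x\<in>interior \<Omega>. 0 \<le> f x"
    and "s \<in> A" "x \<in> \<Omega>"
  shows "0 \<le> b s + lin s x"
proof -
  have "interior \<Omega> \<subseteq> {x. 0 \<le> b s + lin s x}"
    using tropical_onD(2)[OF tr _ \<open>s \<in> A\<close>] nonneg by (fastforce intro: order_trans)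
  moreover have "closed {x. 0 \<le> b s + lin s x}"
    by (intro closed_Collect_le continuous_intros)
  ultimately have "closure (interior \<Omega>) \<subseteq> {x. 0 \<le> b s + lin s x}" by (rule closure_minimal)
  moreover have "closure (interior \<Omega>) = \<Omega>"
    using assms(1-3) by (simp add: convex_closure_interior closure_closed)
  ultimately show ?thesis using \<open>x \<in> \<Omega>\<close> by blast
qed

lemma tropical_on_le_monomial:
  assumes "convex \<Omega>" "closed \<Omega>" "interior \<Omega> \<noteq> {}"
    and tr: "tropical_on \<Omega> A b f" and nonneg: "\<forall>x\<in>\<Omega>. 0 \<le> f x"
    and zero: "\<forall>x\<in>frontier \<Omega>. f x = 0" and "s \<in> A" "x \<in> \<Omega>"
  shows "f x \<le> b s + lin s x"
proof (cases "x \<in> interior \<Omega>")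
  case False
  then have "f x = 0" using zero \<open>x \<in> \<Omega>\<close> \<open>closed \<Omega>\<close> by (simp add: frontier_def closure_closed)
  then show ?thesis
    using tropical_on_monomial_nonneg[OF assms(1-4) _ \<open>s \<in> A\<close> \<open>x \<in> \<Omega>\<close>] nonneg interior_subset by auto
qed (use tropical_onD(2)[OF tr _ \<open>s \<in> A\<close>] in blast)

text \<open>The series is concave along segments; where it meets one of its monomials at both ends
  of a segment it therefore coincides with that monomial in between.\<close>
lemma tropical_on_eq_monomial_on_segment:
  assumes tr: "tropical_on \<Omega> A b f" and below: "\<forall>r\<in>A. \<forall>y\<in>\<Omega>. f y \<le> b r + lin r y"
    and "s \<in> A" "x \<in> \<Omega>" "y \<in> \<Omega>" "f x = b s + lin s x" "f y = b s + lin s y"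
    and z: "z \<in> closed_segment x y" "z \<in> interior \<Omega>"
  shows "f z = b s + lin s z"
proof -
  obtain t where t: "0 \<le> t" "t \<le> 1" "z = (1 - t) *\<^sub>R x + t *\<^sub>R y"
    using z(1) unfolding closed_segment_def by blast
  obtain r where r: "r \<in> A" "f z = b r + lin r z" using tropical_onD(1)[OF tr z(2)] by blast
  have "b s + lin s z = (1 - t) * f x + t * f y"
    using assms(6,7) unfolding t(3) lin_convex_comb by (simp add: algebra_simps)
  also have "\<dots> \<le> (1 - t) * (b r + lin r x) + t * (b r + lin r y)"
    using below r(1) assms(4,5) t(1,2) by (intro add_mono mult_left_mono) auto
  also have "\<dots> = f z"
    using r(2) unfolding t(3) lin_convex_comb by (simp add: algebra_simps)
  finally show ?thesis using tropical_onD(2)[OF tr z(2) \<open>s \<in> A\<close>] by simp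
qed

lemma component_single_monomial:
  assumes tr: "tropical_on \<Omega> A b f" and nonneg: "\<forall>x\<in>interior \<Omega>. 0 \<le> f x"
    and U: "U \<in> components (interior \<Omega> - tcurve \<Omega> f)"
  obtains s where "s \<in> A" "\<forall>x\<in>U. f x = b s + lin s x"
proof -
  define active where "active x = {s\<in>A. f x = b s + lin s x}" for x
  have U_sub: "U \<subseteq> interior \<Omega> - tcurve \<Omega> f" using U by (rule in_components_subset)
  have single: "\<exists>s. active x = {s}" if x: "x \<in> U" for x
  proof -
    have "x \<in> interior \<Omega>" "x \<notin> tcurve \<Omega> f" using x U_sub by auto
    then have two: "\<not> (\<exists>s1\<in>A. \<exists>s2\<in>A. s1 \<noteq> s2 \<and> f x = b s1 + lin s1 x \<and> f x = b s2 + lin s2 x)"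
      by (simp add: tcurve_tropical_on_iff[OF tr nonneg])
    obtain s where "s \<in> A" "f x = b s + lin s x" using tropical_onD(1)[OF tr \<open>x \<in> interior \<Omega>\<close>] by blast
    with two have "active x = {s}" unfolding active_def by blast
    then show ?thesis by blast
  qed
  have "active constant_on U"
  proof (rule locally_constant_imp_constant)
    show "connected U" using U by (rule in_components_connected)
  next
    fix a assume "a \<in> U"
    then obtain s0 where s0: "active a = {s0}" using single by blast
    then have "s0 \<in> A" and unique: "\<forall>s\<in>A. f a = b s + lin s a \<longleftrightarrow> s = s0"
      by (auto simp: active_def)
    have "a \<in> interior \<Omega>" using \<open>a \<in> U\<close> U_sub by blast
    then obtain r where "r > 0" and affine: "\<forall>x\<in>ball a r. f x = b s0 + lin s0 x"
      by (rule tropical_on_unique_active_affine[OF tr nonneg _ \<open>s0 \<in> A\<close> unique])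
    have "\<forall>x\<in>U \<inter> ball a r. active x = active a"
    proof
      fix x assume "x \<in> U \<inter> ball a r"
      have "s0 \<in> active x" using affine \<open>x \<in> U \<inter> ball a r\<close> \<open>s0 \<in> A\<close> by (simp add: active_def)
      moreover obtain s' where "active x = {s'}" using single \<open>x \<in> U \<inter> ball a r\<close> by blast
      ultimately show "active x = active a" using s0 by simp
    qed
    moreover have "openin (top_of_set U) (U \<inter> ball a r)" by (simp add: openin_open_Int)
    ultimately show "\<exists>T. openin (top_of_set U) T \<and> a \<in> T \<and> (\<forall>x\<in>T. active x = active a)"
      using \<open>a \<in> U\<close> centre_in_ball[of a r] \<open>r > 0\<close> by blast
  qed
  moreover obtain u where "u \<in> U" using U in_components_nonempty by blast
  moreover obtain s where "active u = {s}" using single \<open>u \<in> U\<close> by blast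
  ultimately have "\<forall>x\<in>U. s \<in> active x" unfolding constant_on_def by (metis singletonI)
  then show thesis using that \<open>u \<in> U\<close> unfolding active_def by blast
qed

text \<open>The set where the series agrees with the monomial it equals on a component \<open>U\<close> of the
  smooth locus is convex, and its interior is a connected part of the smooth locus meeting \<open>U\<close>;
  so all of it lies in the closure of \<open>U\<close>.\<close>
lemma coincidence_set_subset_closure_component:
  assumes "convex \<Omega>" "closed \<Omega>" "interior \<Omega> \<noteq> {}"
    and tr: "tropical_on \<Omega> A b f" and nonneg: "\<forall>x\<in>\<Omega>. 0 \<le> f x" and zero: "\<forall>x\<in>frontier \<Omega>. f x = 0"
    and U: "U \<in> components (interior \<Omega> - tcurve \<Omega> f)"
    and s: "s \<in> A" "\<forall>x\<in>U. f x = b s + lin s x"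
  shows "{x\<in>interior \<Omega>. f x = b s + lin s x} \<subseteq> closure U"
proof -
  define Z where "Z = {x\<in>interior \<Omega>. f x = b s + lin s x}"
  have below: "\<forall>r\<in>A. \<forall>y\<in>\<Omega>. f y \<le> b r + lin r y"
    using tropical_on_le_monomial[OF assms(1-6)] by blast
  have "convex Z"
  proof (rule convexI)
    fix x y :: pt and u v :: real assume xy: "x \<in> Z" "y \<in> Z" and uv: "0 \<le> u" "0 \<le> v" "u + v = 1"
    have int: "u *\<^sub>R x + v *\<^sub>R y \<in> interior \<Omega>"
      using convexD[OF convex_interior[OF \<open>convex \<Omega>\<close>]] xy uv unfolding Z_def by blast
    moreover have "u *\<^sub>R x + v *\<^sub>R y \<in> closed_segment x y"
      using uv by (auto simp: closed_segment_def intro!: exI[of _ v])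
    moreover have "x \<in> \<Omega>" "y \<in> \<Omega>" "f x = b s + lin s x" "f y = b s + lin s y"
      using xy interior_subset unfolding Z_def by auto
    ultimately have "f (u *\<^sub>R x + v *\<^sub>R y) = b s + lin s (u *\<^sub>R x + v *\<^sub>R y)"
      using tropical_on_eq_monomial_on_segment[OF tr below s(1)] by blast
    then show "u *\<^sub>R x + v *\<^sub>R y \<in> Z" using int unfolding Z_def by blast
  qed
  have U_sub: "U \<subseteq> interior \<Omega> - tcurve \<Omega> f" using U by (rule in_components_subset)
  have "open U" using open_components[OF open_smooth_locus U] .
  moreover have "U \<subseteq> Z" using s(2) U_sub unfolding Z_def by blast
  ultimately have U_int: "U \<subseteq> interior Z" by (rule interior_maximal[rotated])
  have "smooth_on (interior Z) f"
    using interior_subset[of Z] by (intro smooth_on_affine[of _ _ "b s" s]) (auto simp: Z_def)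
  moreover have "interior Z \<subseteq> interior \<Omega>" using interior_subset[of Z] unfolding Z_def by blast
  ultimately have "interior Z \<inter> tcurve \<Omega> f = {}"
    unfolding tcurve_def by (auto intro!: exI[of _ "interior Z"])
  with \<open>interior Z \<subseteq> interior \<Omega>\<close> have "interior Z \<subseteq> interior \<Omega> - tcurve \<Omega> f" by blast
  moreover have "U \<noteq> {}" using U in_components_nonempty by blast
  ultimately have "interior Z \<subseteq> U"
    using U_int by (intro components_maximal[OF U convex_connected[OF convex_interior[OF \<open>convex Z\<close>]]]) auto
  then have "closure (interior Z) \<subseteq> closure U" by (rule closure_mono)
  moreover have "closure (interior Z) = closure Z"
    using convex_closure_interior[OF \<open>convex Z\<close>] U_int \<open>U \<noteq> {}\<close> by blast
  then have "Z \<subseteq> closure (interior Z)" by (simp add: closure_subset)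
  ultimately show ?thesis unfolding Z_def[symmetric] by (rule order_trans[rotated])
qed

lemma coincidence_point_in_closure_component:
  assumes \<Omega>: "convex \<Omega>" "closed \<Omega>" "interior \<Omega> \<noteq> {}"
    and tr: "tropical_on \<Omega> A b f" and nonneg: "\<forall>x\<in>\<Omega>. 0 \<le> f x" and zero: "\<forall>x\<in>frontier \<Omega>. f x = 0"
    and U: "U \<in> components (interior \<Omega> - tcurve \<Omega> f)"
    and s: "s \<in> A" "\<forall>x\<in>U. f x = b s + lin s x"
    and z: "z \<in> \<Omega>" "f z = b s + lin s z"
  shows "z \<in> closure U"
proof -
  have below: "\<forall>r\<in>A. \<forall>y\<in>\<Omega>. f y \<le> b r + lin r y"
    using tropical_on_le_monomial[OF \<Omega> tr nonneg zero] by blast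
  have U_sub: "U \<subseteq> interior \<Omega>" using in_components_subset[OF U] by blast
  obtain u where "u \<in> U" using in_components_nonempty[OF U] by blast
  show ?thesis
  proof (cases "u = z")
    case False
    have "open_segment u z \<subseteq> interior \<Omega>"
      using in_interior_closure_convex_segment[OF \<Omega>(1)] \<open>u \<in> U\<close> U_sub z(1) closure_subset by blast
    then have "open_segment u z \<subseteq> {x\<in>interior \<Omega>. f x = b s + lin s x}"
      using tropical_on_eq_monomial_on_segment[OF tr below s(1) _ z(1) _ z(2)]
        \<open>u \<in> U\<close> U_sub s(2) interior_subset open_closed_segment by blast
    also have "\<dots> \<subseteq> closure U"
      by (rule coincidence_set_subset_closure_component[OF \<Omega> tr nonneg zero U s])
    finally have "closure (open_segment u z) \<subseteq> closure U"
      using closure_minimal by blast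
    then show ?thesis using False ends_in_segment(2)[of u z] by auto
  qed (use \<open>u \<in> U\<close> closure_subset in blast)
qed

text \<open>A zero of the monomial of \<open>U\<close> would lie in the closure of \<open>U\<close>, hence in the interior;
  an affine function that is nonnegative near an interior zero is identically zero, and then
  so is the series.\<close>
lemma component_monomial_pos:
  assumes \<Omega>: "compact \<Omega>" "convex \<Omega>" "interior \<Omega> \<noteq> {}"
    and tr: "tropical_on \<Omega> A b f" and nonneg: "\<forall>x\<in>\<Omega>. 0 \<le> f x" and zero: "\<forall>x\<in>frontier \<Omega>. f x = 0"
    and U: "U \<in> components (interior \<Omega> - tcurve \<Omega> f)" "closure U \<inter> frontier \<Omega> = {}"
    and s: "s \<in> A" "\<forall>x\<in>U. f x = b s + lin s x"
  shows "\<forall>x\<in>\<Omega>. 0 < b s + lin s x"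
proof (rule ccontr)
  assume "\<not> ?thesis"
  then obtain z where z: "z \<in> \<Omega>" "b s + lin s z \<le> 0" by (auto simp: not_less)
  have "closed \<Omega>" using \<Omega>(1) by (rule compact_imp_closed)
  have monomial_nonneg: "0 \<le> b s + lin s y" if "y \<in> \<Omega>" for y
    using tropical_on_monomial_nonneg[OF \<Omega>(2) \<open>closed \<Omega>\<close> \<Omega>(3) tr _ s(1) that] nonneg interior_subset
    by blast
  have "f z \<le> b s + lin s z"
    by (rule tropical_on_le_monomial[OF \<Omega>(2) \<open>closed \<Omega>\<close> \<Omega>(3) tr nonneg zero s(1) z(1)])
  then have z_zero: "b s + lin s z = 0" "f z = b s + lin s z"
    using z monomial_nonneg[OF z(1)] nonneg by auto
  have "z \<in> closure U"
    by (rule coincidence_point_in_closure_component[OF \<Omega>(2) \<open>closed \<Omega>\<close> \<Omega>(3) tr nonneg zero U(1) s z(1) z_zero(2)])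
  moreover have "closure U \<subseteq> interior \<Omega>"
  proof -
    have "U \<subseteq> \<Omega>" using in_components_subset[OF U(1)] interior_subset by blast
    then have "closure U \<subseteq> \<Omega>" using closure_minimal[OF _ \<open>closed \<Omega>\<close>] by blast
    then show ?thesis using U(2) \<open>closed \<Omega>\<close> by (auto simp: frontier_def closure_closed)
  qed
  ultimately obtain R where "R > 0" "cball z R \<subseteq> interior \<Omega>"
    using open_contains_cball[of "interior \<Omega>"] by blast
  then have "\<forall>y\<in>cball z R. 0 \<le> b s + lin s y" using monomial_nonneg interior_subset by blast
  then have "R / 2 * norm1 s \<le> 0"
    using affine_nonneg_on_cball_bound[OF \<open>R > 0\<close>] z_zero(1) by metis
  then have "norm1 s = 0" using \<open>R > 0\<close> by (simp add: mult_le_0_iff norm1_def)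
  then have "b s + lin s x = 0" for x using z_zero(1) by (simp add: norm1_eq_0_iff)
  then have "\<forall>x\<in>interior \<Omega>. f x = 0"
    using tropical_onD(2)[OF tr _ s(1)] nonneg interior_subset by (metis order_antisym subsetD)
  then show False
    using components_smooth_locus_const[OF \<Omega>] U by blast
qed

lemma tropical_on_lower_monomial:
  assumes tr: "tropical_on \<Omega> A b f" and "s \<in> A" "\<epsilon> > 0"
  shows "tropical_on \<Omega> A (b(s := b s - \<epsilon>))
           (\<lambda>x. if x \<in> interior \<Omega> then min (f x) (b s + lin s x - \<epsilon>) else f x)"
  unfolding tropical_on_def
proof (rule ballI, rule conjI)
  fix x assume x: "x \<in> interior \<Omega>"
  show "\<forall>r\<in>A. (if x \<in> interior \<Omega> then min (f x) (b s + lin s x - \<epsilon>) else f x)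
      \<le> (b(s := b s - \<epsilon>)) r + lin r x"
    using tropical_onD(2)[OF tr x] x by (auto simp: min_le_iff_disj)
  show "\<exists>r\<in>A. (if x \<in> interior \<Omega> then min (f x) (b s + lin s x - \<epsilon>) else f x)
      = (b(s := b s - \<epsilon>)) r + lin r x"
  proof (cases "f x \<le> b s + lin s x - \<epsilon>")
    case True
    obtain r where "r \<in> A" "f x = b r + lin r x" using tropical_onD(1)[OF tr x] by blast
    moreover from this True \<open>\<epsilon> > 0\<close> have "r \<noteq> s" by auto
    ultimately show ?thesis using True x by (intro bexI[of _ r]) auto
  qed (use x \<open>s \<in> A\<close> in \<open>auto intro!: bexI[of _ s]\<close>)
qed

text \<open>By continuity the lowered series agrees with the original one near each point of \<open>P\<close>,
  so \<open>P\<close> stays on its curve.\<close>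
lemma lower_monomial_in_G_family:
  assumes "P \<subseteq> interior \<Omega>" and tr: "tropical_on \<Omega> A b f" and f: "f \<in> G_family \<Omega> P zero_fun"
    and "s \<in> A" "\<epsilon> > 0" and pos: "\<forall>x\<in>\<Omega>. \<epsilon> < b s + lin s x"
    and off_P: "\<forall>p\<in>P. \<epsilon> < b s + lin s p - f p"
  shows "(\<lambda>x. if x \<in> interior \<Omega> then min (f x) (b s + lin s x - \<epsilon>) else f x) \<in> G_family \<Omega> P zero_fun"
    (is "?f' \<in> _")
proof -
  have "tropical_series \<Omega> f" and P_curve: "P \<subseteq> tcurve \<Omega> f"
    using f by (simp_all add: G_family_def V_def)
  then have nonneg: "\<forall>x\<in>\<Omega>. 0 \<le> f x" and zero: "\<forall>x\<in>frontier \<Omega>. f x = 0"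
    unfolding tropical_series_def by blast+
  have f'_nonneg: "\<forall>x\<in>\<Omega>. 0 \<le> ?f' x"
  proof
    fix x assume "x \<in> \<Omega>"
    then show "0 \<le> ?f' x" using nonneg pos by (simp add: less_imp_le)
  qed
  have "\<forall>x\<in>frontier \<Omega>. ?f' x = 0"
  proof
    fix x assume "x \<in> frontier \<Omega>"
    then show "?f' x = 0" using zero by (simp add: frontier_def)
  qed
  with tropical_on_lower_monomial[OF tr \<open>s \<in> A\<close> \<open>\<epsilon> > 0\<close>] f'_nonneg
  have "tropical_series \<Omega> ?f'" by (rule tropical_series_if_tropical_on)
  moreover have "p \<in> tcurve \<Omega> ?f'" if "p \<in> P" for p
  proof -
    have "p \<in> interior \<Omega>" using that assms(1) by blast
    then have "isCont f p" using tropical_on_isCont[OF tr] nonneg interior_subset by blast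
    then have "isCont (\<lambda>x. b s + lin s x - f x) p" by (intro continuous_intros)
    moreover have "open {\<epsilon><..}" "b s + lin s p - f p \<in> {\<epsilon><..}" using off_P that by auto
    ultimately obtain S where "open S" "p \<in> S" and S: "\<forall>x\<in>S. b s + lin s x - f x \<in> {\<epsilon><..}"
      unfolding continuous_at_open by blast
    have eq: "\<forall>x\<in>S \<inter> interior \<Omega>. ?f' x = f x"
    proof
      fix x assume "x \<in> S \<inter> interior \<Omega>"
      then show "?f' x = f x" using S by force
    qed
    have "open (S \<inter> interior \<Omega>)" "p \<in> S \<inter> interior \<Omega>"
      using \<open>open S\<close> \<open>p \<in> S\<close> \<open>p \<in> interior \<Omega>\<close> by auto
    moreover have "p \<in> tcurve \<Omega> f" using P_curve that by blast
    ultimately show ?thesis by (intro tcurve_eq_on_open[OF _ _ _ eq])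
  qed
  ultimately have "?f' \<in> V \<Omega>" "P \<subseteq> tcurve \<Omega> ?f'" by (auto simp: V_def)
  with f'_nonneg show ?thesis unfolding G_family_def zero_fun_def by (intro CollectI conjI) auto
qed

lemma least_member_monomial_touches:
  assumes "compact \<Omega>" "finite P" "P \<subseteq> interior \<Omega>"
    and tr: "tropical_on \<Omega> A b f" and f: "f \<in> G_family \<Omega> P zero_fun"
    and least: "\<forall>g\<in>G_family \<Omega> P zero_fun. \<forall>x\<in>\<Omega>. f x \<le> g x"
    and s: "s \<in> A" "\<forall>x\<in>\<Omega>. 0 < b s + lin s x"
    and u: "u \<in> interior \<Omega>" "f u = b s + lin s u"
  shows "\<exists>p\<in>P. f p = b s + lin s p"
proof (rule ccontr)
  assume "\<not> ?thesis"
  then have off_P: "0 < b s + lin s p - f p" if "p \<in> P" for p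
    using tropical_onD(2)[OF tr _ s(1), of p] assms(3) that by force
  have "continuous_on \<Omega> (\<lambda>x. b s + lin s x)" by (intro continuous_intros)
  then obtain x0 where "x0 \<in> \<Omega>" and x0_min: "\<forall>y\<in>\<Omega>. b s + lin s x0 \<le> b s + lin s y"
    using continuous_attains_inf[OF \<open>compact \<Omega>\<close>] u(1) interior_subset by blast
  define m where "m = Min (insert (b s + lin s x0) ((\<lambda>p. b s + lin s p - f p) ` P))"
  have "m \<le> b s + lin s x0" and m_P: "\<forall>p\<in>P. m \<le> b s + lin s p - f p" and "0 < m"
    using \<open>finite P\<close> s(2) \<open>x0 \<in> \<Omega>\<close> off_P by (auto simp: m_def)
  then have m_\<Omega>: "\<forall>x\<in>\<Omega>. m \<le> b s + lin s x" using x0_min by (meson order_trans)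
  have "m / 2 > 0" "\<forall>x\<in>\<Omega>. m / 2 < b s + lin s x" "\<forall>p\<in>P. m / 2 < b s + lin s p - f p"
    using \<open>0 < m\<close> m_\<Omega> m_P by (auto simp: field_simps)
  note lowered = lower_monomial_in_G_family[OF assms(3) tr f s(1) this]
  have "u \<in> \<Omega>" using u(1) interior_subset by blast
  then have "f u \<le> min (f u) (b s + lin s u - m / 2)"
    using bspec[OF bspec[OF least lowered] \<open>u \<in> \<Omega>\<close>] u(1) by simp
  then show False using u(2) \<open>0 < m\<close> by simp
qed

theorem mainTheorem2:
  fixes \<Omega> P :: "(real \<times> real) set" and f :: "real \<times> real \<Rightarrow> real"
  assumes "compact \<Omega>" and "convex \<Omega>" and "interior \<Omega> \<noteq> {}"
    and "finite P" and "P \<subseteq> interior \<Omega>"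
    and "f = G \<Omega> P zero_fun"
  shows "\<forall>U \<in> components (interior \<Omega> - tcurve \<Omega> f).
           closure U \<inter> frontier \<Omega> = {} \<longrightarrow> closure U \<inter> P \<noteq> {}"
proof (intro ballI impI)
  fix U assume U: "U \<in> components (interior \<Omega> - tcurve \<Omega> f)" "closure U \<inter> frontier \<Omega> = {}"
  have "closed \<Omega>" using assms(1) by (rule compact_imp_closed)
  show "closure U \<inter> P \<noteq> {}"
  proof (cases "G_family \<Omega> P zero_fun = {}")
    case True
    have "\<forall>x\<in>interior \<Omega>. f x = Inf {}"
    proof
      fix x assume "x \<in> interior \<Omega>"
      then show "f x = Inf {}" using G_eq_Inf[of x \<Omega> P zero_fun] True assms(6) interior_subset by auto
    qed
    then show ?thesis using components_smooth_locus_const[OF assms(1-3)] U by blast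
  next
    case False
    have f: "f \<in> G_family \<Omega> P zero_fun"
      using G_zero_in_G_family[OF \<open>closed \<Omega>\<close> assms(3,5) False] assms(6) by simp
    have least: "\<forall>g\<in>G_family \<Omega> P zero_fun. \<forall>x\<in>\<Omega>. f x \<le> g x" using G_le assms(6) by blast
    have series: "tropical_series \<Omega> f" using f by (simp add: G_family_def V_def)
    then obtain A b where tr: "tropical_on \<Omega> A b f" by (rule tropical_series_imp_tropical_on)
    have nonneg: "\<forall>x\<in>\<Omega>. 0 \<le> f x" and zero: "\<forall>x\<in>frontier \<Omega>. f x = 0"
      using series unfolding tropical_series_def by blast+
    obtain s where s: "s \<in> A" "\<forall>x\<in>U. f x = b s + lin s x"
      using component_single_monomial[OF tr _ U(1)] nonneg interior_subset by blast
    have pos: "\<forall>x\<in>\<Omega>. 0 < b s + lin s x"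
      by (rule component_monomial_pos[OF assms(1-3) tr nonneg zero U s])
    obtain u where "u \<in> U" using in_components_nonempty[OF U(1)] by blast
    then have "u \<in> interior \<Omega>" using in_components_subset[OF U(1)] by blast
    then obtain p where "p \<in> P" "f p = b s + lin s p"
      using least_member_monomial_touches[OF assms(1,4,5) tr f least s(1) pos] s(2) \<open>u \<in> U\<close> by blast
    moreover have "p \<in> \<Omega>" using \<open>p \<in> P\<close> assms(5) interior_subset by blast
    ultimately have "p \<in> closure U"
      by (intro coincidence_point_in_closure_component[OF assms(2) \<open>closed \<Omega>\<close> assms(3) tr nonneg zero U(1) s])
    then show ?thesis using \<open>p \<in> P\<close> by blast
  qed
qed

end
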